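(* For any sets $A_1,A_2\subset\mathbb R^n$ whose Euclidean distance $d:=\inf\{|x-z|:x\in A_1,z\in A_2\}$ is positive, $$c_\alpha(A_1)+c_\alpha(A_2)\le c_\alpha(A_1\cup A_2)\left[1+\frac{\max\{c_\alpha(A_1),c_\alpha(A_2)\}}{d^{\,n-\alpha}}\right].$$
   Context: Standing assumptions: $n\ge3$, $\alpha\in(0,2]$, and $\kappa_\alpha(x,y)=|x-y|^{\alpha-n}$ is the Riesz kernel on $\mathbb R^n$. The energy of a positive Radon measure $\mu$ is $\|\mu\|_\alpha^2=\iint\kappa_\alpha\,d\mu\,d\mu$; $\mathcal E^+_\alpha(A)$ is the set of positive measures of finite energy concentrated on $A$. The inner capacity of $A\subset\mathbb R^n$ is defined by $1/c_\alpha(A)=\inf\{\|\mu\|_\alpha^2:\ \mu\in\mathcal E^+_\alpha(A),\ \mu(\mathbb R^n)=1\}$ (with values in $[0,\infty]$). *)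

theory Defs
  imports "HOL-Analysis.Analysis"
begin

text \<open>Riesz kernel |x-y|^(alpha-n) on R^n, n = DIM('a), with value infinity on the diagonal
  (alpha < n, so the exponent is negative).\<close>
definition riesz_kernel :: "real \<Rightarrow> 'a::euclidean_space \<Rightarrow> 'a \<Rightarrow> ennreal" where
  "riesz_kernel \<alpha> x y =
     (if x = y then \<infinity> else ennreal (dist x y powr (\<alpha> - real DIM('a))))"

definition riesz_energy :: "real \<Rightarrow> 'a::euclidean_space measure \<Rightarrow> ennreal" where
  "riesz_energy \<alpha> \<mu> = (\<integral>\<^sup>+ x. (\<integral>\<^sup>+ y. riesz_kernel \<alpha> x y \<partial>\<mu>) \<partial>\<mu>)"

definition radon_measure :: "'a::euclidean_space measure \<Rightarrow> bool" where
  "radon_measure \<mu> \<longleftrightarrow> sets \<mu> = sets borel \<and> (\<forall>K. compact K \<longrightarrow> emeasure \<mu> K < \<infinity>)"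

definition concentrated_on :: "'a::euclidean_space measure \<Rightarrow> 'a set \<Rightarrow> bool" where
  "concentrated_on \<mu> A \<longleftrightarrow> (\<exists>B \<in> sets borel. B \<subseteq> A \<and> emeasure \<mu> (UNIV - B) = 0)"

definition finite_energy_measures :: "real \<Rightarrow> 'a::euclidean_space set \<Rightarrow> 'a measure set" where
  "finite_energy_measures \<alpha> A =
     {\<mu>. radon_measure \<mu> \<and> concentrated_on \<mu> A \<and> riesz_energy \<alpha> \<mu> < \<infinity>}"

text \<open>Inner capacity: 1/c(A) = inf of energies of unit measures in E^+(A);
  values in [0,\<infinity>] (inverse 0 = \<infinity>, inverse \<infinity> = 0, inf of empty set = \<infinity>).\<close>
definition inner_capacity :: "real \<Rightarrow> 'a::euclidean_space set \<Rightarrow> ennreal" where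
  "inner_capacity \<alpha> A =
     inverse (INF \<mu> \<in> {\<mu> \<in> finite_energy_measures \<alpha> A. emeasure \<mu> UNIV = 1}. riesz_energy \<alpha> \<mu>)"

end

theory Submission
  imports Defs
begin

text \<open>
  Suppose c(A1) = r1 and c(A2) = r2 are positive and finite. Take unit measures \<mu>1, \<mu>2 on
  A1, A2 with energies close to 1/r1, 1/r2 and form the mixture \<nu> = s1 \<mu>1 + s2 \<mu>2 with
  si = ri/(r1 + r2). Between points of A1 and A2 the kernel is at most D = d^(\<alpha> - n), so the
  cross terms of the energy of \<nu> are at most D and
    energy(\<nu>) \<le> s1^2/r1 + s2^2/r2 + 2 s1 s2 D \<le> (1 + max r1 r2 D)/(r1 + r2);
  inverting gives the inequality. If a capacity is 0 or \<infinity>, the claim follows from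
  monotonicity of the capacity.
\<close>

definition add_measure :: "'a measure \<Rightarrow> 'a measure \<Rightarrow> 'a measure" where
  "add_measure M N = measure_of (space M) (sets M) (\<lambda>A. emeasure M A + emeasure N A)"

lemma sets_add_measure [simp, measurable_cong]: "sets (add_measure M N) = sets M"
  by (simp add: add_measure_def)

lemma space_add_measure: "space (add_measure M N) = space M"
  by (simp add: add_measure_def)

lemma emeasure_add_measure:
  assumes "sets N = sets M"
  shows "emeasure (add_measure M N) A = emeasure M A + emeasure N A"
proof (cases "A \<in> sets M")
  case True
  have "countably_additive (sets M) (\<lambda>A. emeasure M A + emeasure N A)"
    using assms by (auto intro!: countably_additiveI simp: suminf_add[symmetric] suminf_emeasure)
  then show ?thesis
    unfolding add_measure_def using True
    by (intro emeasure_measure_of_sigma) (auto simp: positive_def sets.sigma_algebra_axioms)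
qed (simp add: emeasure_notin_sets assms)

lemma nn_integral_add_measure:
  assumes N: "sets N = sets M" and f: "f \<in> borel_measurable M"
  shows "nn_integral (add_measure M N) f = nn_integral M f + nn_integral N f"
  using f
proof induction
  case (cong f g)
  then show ?case
    using sets_eq_imp_space_eq[OF N]
    by (simp add: space_add_measure cong: nn_integral_cong_simp)
next
  case (set A)
  then show ?case using N by (simp add: emeasure_add_measure)
next
  case (mult u c)
  then show ?case using N
    by (simp add: nn_integral_cmult distrib_left cong: measurable_cong_sets)
next
  case (add u v)
  then show ?case using N
    by (simp add: nn_integral_add cong: measurable_cong_sets)
next
  case (seq U)
  then show ?case using N
    by (simp add: nn_integral_monotone_convergence_SUP image_comp incseq_nn_integral
        ennreal_SUP_add[symmetric] cong: measurable_cong_sets)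
qed

lemma radon_measure_add_measure:
  "radon_measure \<mu> \<Longrightarrow> radon_measure \<nu> \<Longrightarrow> radon_measure (add_measure \<mu> \<nu>)"
  by (auto simp: radon_measure_def emeasure_add_measure)

lemma radon_measure_scale_measure:
  "radon_measure \<mu> \<Longrightarrow> r < \<infinity> \<Longrightarrow> radon_measure (scale_measure r \<mu>)"
  by (auto simp: radon_measure_def ennreal_mult_less_top)

lemma concentrated_on_add_measure:
  assumes "sets \<mu> = sets borel" "sets \<nu> = sets borel"
    and "concentrated_on \<mu> A" "concentrated_on \<nu> B"
  shows "concentrated_on (add_measure \<mu> \<nu>) (A \<union> B)"
proof -
  obtain A' B' where A': "A' \<in> sets borel" "A' \<subseteq> A" "emeasure \<mu> (UNIV - A') = 0"
    and B': "B' \<in> sets borel" "B' \<subseteq> B" "emeasure \<nu> (UNIV - B') = 0"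
    using assms(3,4) unfolding concentrated_on_def by blast
  have "emeasure \<mu> (UNIV - (A' \<union> B')) = 0" "emeasure \<nu> (UNIV - (A' \<union> B')) = 0"
    using A' B' assms(1,2) by (auto intro: emeasure_eq_0)
  then show ?thesis
    unfolding concentrated_on_def using A' B' assms(1,2)
    by (intro bexI[of _ "A' \<union> B'"]) (auto simp: emeasure_add_measure)
qed

lemma concentrated_on_scale_measure:
  "concentrated_on \<mu> A \<Longrightarrow> concentrated_on (scale_measure r \<mu>) A"
  by (auto simp: concentrated_on_def)

lemma AE_concentrated_on:
  assumes "sets \<mu> = sets borel" "concentrated_on \<mu> A"
  shows "AE x in \<mu>. x \<in> A"
proof -
  obtain B where B: "B \<in> sets borel" "B \<subseteq> A" "emeasure \<mu> (UNIV - B) = 0"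
    using assms(2) unfolding concentrated_on_def by blast
  then have "UNIV - B \<in> null_sets \<mu>"
    using assms(1) by (auto intro: null_setsI)
  then show ?thesis
    by (rule AE_I') (use B(2) in auto)
qed

definition riesz_potential :: "real \<Rightarrow> 'a::euclidean_space measure \<Rightarrow> 'a \<Rightarrow> ennreal" where
  "riesz_potential \<alpha> \<mu> x = (\<integral>\<^sup>+ y. riesz_kernel \<alpha> x y \<partial>\<mu>)"

definition riesz_mutual_energy :: "real \<Rightarrow> 'a::euclidean_space measure \<Rightarrow> 'a measure \<Rightarrow> ennreal" where
  "riesz_mutual_energy \<alpha> \<mu> \<nu> = (\<integral>\<^sup>+ x. riesz_potential \<alpha> \<nu> x \<partial>\<mu>)"

lemma riesz_energy_eq_mutual_energy: "riesz_energy \<alpha> \<mu> = riesz_mutual_energy \<alpha> \<mu> \<mu>"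
  by (simp add: riesz_energy_def riesz_mutual_energy_def riesz_potential_def)

lemma borel_measurable_riesz_kernel:
  "(\<lambda>p. riesz_kernel \<alpha> (fst p) (snd p)) \<in> borel_measurable (borel \<Otimes>\<^sub>M (borel :: 'a::euclidean_space measure))"
proof -
  have "{p::'a \<times> 'a. fst p = snd p} \<in> sets borel"
    by (intro borel_closed closed_Collect_eq continuous_intros)
  then have [measurable]: "{p \<in> space (borel \<Otimes>\<^sub>M borel). fst p = snd p} \<in> sets (borel \<Otimes>\<^sub>M (borel :: 'a measure))"
    unfolding borel_prod by simp
  show ?thesis
    unfolding riesz_kernel_def by measurable
qed

lemma borel_measurable_riesz_kernel_right:
  "riesz_kernel \<alpha> x \<in> borel_measurable (borel :: 'a::euclidean_space measure)"
  using measurable_compose_Pair1[OF _ borel_measurable_riesz_kernel[of \<alpha>], of x] by simp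

lemma borel_measurable_riesz_potential:
  fixes \<mu> :: "'a::euclidean_space measure"
  assumes "sigma_finite_measure \<mu>" "sets \<mu> = sets borel"
  shows "riesz_potential \<alpha> \<mu> \<in> borel_measurable borel"
proof -
  interpret sigma_finite_measure \<mu> by fact
  have "(\<lambda>p. riesz_kernel \<alpha> (fst p) (snd p)) \<in> borel_measurable (borel \<Otimes>\<^sub>M \<mu>)"
    using borel_measurable_riesz_kernel
    by (subst measurable_cong_sets[OF sets_pair_measure_cong[OF refl assms(2)] refl])
  from borel_measurable_nn_integral_fst[OF this] show ?thesis
    by (simp add: riesz_potential_def[abs_def])
qed

lemma riesz_potential_add_measure:
  "sets \<nu> = sets \<mu> \<Longrightarrow> sets \<mu> = sets borel \<Longrightarrow>
    riesz_potential \<alpha> (add_measure \<mu> \<nu>) x = riesz_potential \<alpha> \<mu> x + riesz_potential \<alpha> \<nu> x"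
  unfolding riesz_potential_def
  by (simp add: nn_integral_add_measure borel_measurable_riesz_kernel_right cong: measurable_cong_sets)

lemma riesz_potential_scale_measure:
  "sets \<mu> = sets borel \<Longrightarrow> riesz_potential \<alpha> (scale_measure r \<mu>) x = r * riesz_potential \<alpha> \<mu> x"
  unfolding riesz_potential_def
  by (simp add: nn_integral_scale_measure borel_measurable_riesz_kernel_right cong: measurable_cong_sets)

lemma riesz_mutual_energy_le_setdist:
  fixes \<mu> \<nu> :: "'a::euclidean_space measure"
  assumes "\<alpha> \<le> real DIM('a)" "setdist A B > 0"
    and "sets \<mu> = sets borel" "concentrated_on \<mu> A"
    and "sets \<nu> = sets borel" "concentrated_on \<nu> B"
  shows "riesz_mutual_energy \<alpha> \<mu> \<nu>
    \<le> ennreal (setdist A B powr (\<alpha> - real DIM('a))) * emeasure \<nu> UNIV * emeasure \<mu> UNIV"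
proof -
  define D where "D = ennreal (setdist A B powr (\<alpha> - real DIM('a)))"
  have kernel_le: "riesz_kernel \<alpha> x y \<le> D" if "x \<in> A" "y \<in> B" for x y
  proof -
    have "setdist A B \<le> dist x y"
      using that by (rule setdist_le_dist)
    then show ?thesis
      using assms(1,2) unfolding riesz_kernel_def D_def
      by (auto intro!: ennreal_leI powr_mono2')
  qed
  have space: "space \<mu> = UNIV" "space \<nu> = UNIV"
    using assms(3,5) by (auto dest!: sets_eq_imp_space_eq)
  have "riesz_potential \<alpha> \<nu> x \<le> D * emeasure \<nu> UNIV" if "x \<in> A" for x
    unfolding riesz_potential_def
    using nn_integral_mono_AE[OF AE_mp[OF AE_concentrated_on[OF assms(5,6)]], of "riesz_kernel \<alpha> x" "\<lambda>_. D"]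
      kernel_le[OF that] space by auto
  then have "riesz_mutual_energy \<alpha> \<mu> \<nu> \<le> (\<integral>\<^sup>+ x. D * emeasure \<nu> UNIV \<partial>\<mu>)"
    unfolding riesz_mutual_energy_def
    using AE_concentrated_on[OF assms(3,4)] by (intro nn_integral_mono_AE) auto
  then show ?thesis
    using space by (simp add: D_def)
qed

lemma riesz_energy_mixture:
  fixes \<mu> \<nu> :: "'a::euclidean_space measure"
  assumes "finite_measure \<mu>" "finite_measure \<nu>" "sets \<mu> = sets borel" "sets \<nu> = sets borel"
  shows "riesz_energy \<alpha> (add_measure (scale_measure a \<mu>) (scale_measure b \<nu>))
    = a * a * riesz_energy \<alpha> \<mu> + a * b * (riesz_mutual_energy \<alpha> \<mu> \<nu> + riesz_mutual_energy \<alpha> \<nu> \<mu>)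
      + b * b * riesz_energy \<alpha> \<nu>"
proof -
  define \<rho> where "\<rho> = add_measure (scale_measure a \<mu>) (scale_measure b \<nu>)"
  have [measurable]: "riesz_potential \<alpha> \<mu> \<in> borel_measurable borel" "riesz_potential \<alpha> \<nu> \<in> borel_measurable borel"
    using assms by (auto intro!: borel_measurable_riesz_potential simp: finite_measure_def)
  have integral_\<rho>: "(\<integral>\<^sup>+ x. f x \<partial>\<rho>) = a * (\<integral>\<^sup>+ x. f x \<partial>\<mu>) + b * (\<integral>\<^sup>+ x. f x \<partial>\<nu>)"
    if "f \<in> borel_measurable borel" for f
    using that assms(3,4) unfolding \<rho>_def
    by (simp add: nn_integral_add_measure nn_integral_scale_measure cong: measurable_cong_sets)
  have integral_lin: "(\<integral>\<^sup>+ x. a * riesz_potential \<alpha> \<mu> x + b * riesz_potential \<alpha> \<nu> x \<partial>M)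
      = a * riesz_mutual_energy \<alpha> M \<mu> + b * riesz_mutual_energy \<alpha> M \<nu>" if "sets M = sets borel" for M
    using that unfolding riesz_mutual_energy_def
    by (simp add: nn_integral_add nn_integral_cmult cong: measurable_cong_sets)
  have "riesz_energy \<alpha> \<rho> = (\<integral>\<^sup>+ x. a * riesz_potential \<alpha> \<mu> x + b * riesz_potential \<alpha> \<nu> x \<partial>\<rho>)"
    using assms(3,4) unfolding riesz_energy_eq_mutual_energy riesz_mutual_energy_def
    by (intro nn_integral_cong) (simp add: \<rho>_def riesz_potential_add_measure riesz_potential_scale_measure)
  also have "\<dots> = a * (a * riesz_energy \<alpha> \<mu> + b * riesz_mutual_energy \<alpha> \<mu> \<nu>)
      + b * (a * riesz_mutual_energy \<alpha> \<nu> \<mu> + b * riesz_energy \<alpha> \<nu>)"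
    using assms(3,4) by (simp add: integral_\<rho> integral_lin riesz_energy_eq_mutual_energy)
  finally show ?thesis
    unfolding \<rho>_def by (simp add: algebra_simps)
qed

lemma riesz_energy_mixture_le_setdist:
  fixes \<mu> \<nu> :: "'a::euclidean_space measure"
  assumes "\<alpha> \<le> real DIM('a)" "setdist A B > 0"
    and "\<mu> \<in> finite_energy_measures \<alpha> A" "emeasure \<mu> UNIV = 1"
    and "\<nu> \<in> finite_energy_measures \<alpha> B" "emeasure \<nu> UNIV = 1"
  shows "riesz_energy \<alpha> (add_measure (scale_measure s \<mu>) (scale_measure t \<nu>))
    \<le> s * s * riesz_energy \<alpha> \<mu> + t * t * riesz_energy \<alpha> \<nu>
      + 2 * s * t * ennreal (setdist A B powr (\<alpha> - real DIM('a)))"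
proof -
  define D where "D = ennreal (setdist A B powr (\<alpha> - real DIM('a)))"
  have sets: "sets \<mu> = sets borel" "sets \<nu> = sets borel"
    and conc: "concentrated_on \<mu> A" "concentrated_on \<nu> B"
    using assms(3,5) by (auto simp: finite_energy_measures_def radon_measure_def)
  have finite: "finite_measure \<mu>" "finite_measure \<nu>"
    using assms(4,6) sets by (auto intro!: finite_measureI dest!: sets_eq_imp_space_eq)
  have "riesz_mutual_energy \<alpha> \<mu> \<nu> \<le> D" "riesz_mutual_energy \<alpha> \<nu> \<mu> \<le> D"
    using riesz_mutual_energy_le_setdist[OF assms(1,2) sets(1) conc(1) sets(2) conc(2)]
      riesz_mutual_energy_le_setdist[OF assms(1) _ sets(2) conc(2) sets(1) conc(1)]
      assms(2,4,6) by (simp_all add: D_def setdist_sym)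
  then have "s * t * (riesz_mutual_energy \<alpha> \<mu> \<nu> + riesz_mutual_energy \<alpha> \<nu> \<mu>) \<le> s * t * (2 * D)"
    by (intro mult_left_mono) (auto simp: mult_2 add_mono)
  also have "\<dots> = 2 * s * t * D"
    by (simp add: ac_simps)
  finally show ?thesis
    unfolding riesz_energy_mixture[OF finite sets] D_def[symmetric]
    by (simp add: ac_simps add_left_mono)
qed

lemma mixture_in_finite_energy_measures:
  fixes \<mu> \<nu> :: "'a::euclidean_space measure"
  assumes "\<alpha> \<le> real DIM('a)" "setdist A B > 0"
    and "\<mu> \<in> finite_energy_measures \<alpha> A" "emeasure \<mu> UNIV = 1"
    and "\<nu> \<in> finite_energy_measures \<alpha> B" "emeasure \<nu> UNIV = 1"
    and "s < \<infinity>" "t < \<infinity>"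
  shows "add_measure (scale_measure s \<mu>) (scale_measure t \<nu>) \<in> finite_energy_measures \<alpha> (A \<union> B)"
    and "emeasure (add_measure (scale_measure s \<mu>) (scale_measure t \<nu>)) UNIV = s + t"
proof -
  have \<mu>: "radon_measure \<mu>" "concentrated_on \<mu> A" "riesz_energy \<alpha> \<mu> < \<infinity>" "sets \<mu> = sets borel"
    and \<nu>: "radon_measure \<nu>" "concentrated_on \<nu> B" "riesz_energy \<alpha> \<nu> < \<infinity>" "sets \<nu> = sets borel"
    using assms(3,5) by (auto simp: finite_energy_measures_def radon_measure_def)
  have "s * s * riesz_energy \<alpha> \<mu> + t * t * riesz_energy \<alpha> \<nu>
      + 2 * s * t * ennreal (setdist A B powr (\<alpha> - real DIM('a))) < \<infinity>"
    using \<mu>(3) \<nu>(3) assms(7,8) by (simp add: ennreal_mult_less_top)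
  then have "riesz_energy \<alpha> (add_measure (scale_measure s \<mu>) (scale_measure t \<nu>)) < \<infinity>"
    by (rule order.strict_trans1[OF riesz_energy_mixture_le_setdist[OF assms(1-6)]])
  moreover have "radon_measure (add_measure (scale_measure s \<mu>) (scale_measure t \<nu>))"
    using \<mu>(1) \<nu>(1) assms(7,8) by (intro radon_measure_add_measure radon_measure_scale_measure)
  moreover have "concentrated_on (add_measure (scale_measure s \<mu>) (scale_measure t \<nu>)) (A \<union> B)"
    using \<mu>(2,4) \<nu>(2,4) by (intro concentrated_on_add_measure concentrated_on_scale_measure) simp_all
  ultimately show "add_measure (scale_measure s \<mu>) (scale_measure t \<nu>) \<in> finite_energy_measures \<alpha> (A \<union> B)"
    by (simp add: finite_energy_measures_def)
  show "emeasure (add_measure (scale_measure s \<mu>) (scale_measure t \<nu>)) UNIV = s + t"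
    using \<mu>(4) \<nu>(4) assms(4,6) by (simp add: emeasure_add_measure)
qed

lemma ennreal_inverse_antimono: "(x::ennreal) \<le> y \<Longrightarrow> inverse y \<le> inverse x"
proof (cases "y = \<infinity> \<or> x = 0")
  case False
  assume "x \<le> y"
  with False obtain a b where "x = ennreal a" "y = ennreal b" "0 < a" "a \<le> b"
    by (cases x rule: ennreal_cases; cases y rule: ennreal_cases) (auto simp: top_unique)
  then show ?thesis
    by (simp add: inverse_ennreal le_imp_inverse_le)
qed auto

lemma ennreal_inverse_inverse: "inverse (inverse (x::ennreal)) = x"
  by (cases x rule: ennreal_cases) (auto simp: inverse_ennreal le_less)

lemma ennreal_add_le_mult_if_degenerate:
  fixes x y z F :: ennreal
  assumes "x \<le> z" "y \<le> z" "1 \<le> F" "x \<in> {0, \<infinity>} \<or> y \<in> {0, \<infinity>}"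
  shows "x + y \<le> z * F"
proof -
  consider "x + y \<le> z" | "z = \<infinity>"
    using assms(1,2,4) by (auto simp: top_unique)
  then show ?thesis
  proof cases
    case 1
    then show ?thesis
      using mult_left_mono[OF assms(3), of z] by simp
  next
    case 2
    moreover have "F \<noteq> 0"
      using assms(3) by auto
    ultimately show ?thesis
      by (simp add: ennreal_top_mult)
  qed
qed

definition riesz_min_energy :: "real \<Rightarrow> 'a::euclidean_space set \<Rightarrow> ennreal" where
  "riesz_min_energy \<alpha> A =
     (INF \<mu> \<in> {\<mu> \<in> finite_energy_measures \<alpha> A. emeasure \<mu> UNIV = 1}. riesz_energy \<alpha> \<mu>)"

lemma inner_capacity_eq_inverse_min_energy: "inner_capacity \<alpha> A = inverse (riesz_min_energy \<alpha> A)"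
  by (simp add: inner_capacity_def riesz_min_energy_def)

lemma riesz_min_energy_eq_inverse_capacity: "riesz_min_energy \<alpha> A = inverse (inner_capacity \<alpha> A)"
  by (simp add: inner_capacity_eq_inverse_min_energy ennreal_inverse_inverse)

lemma inner_capacity_mono: "A \<subseteq> B \<Longrightarrow> inner_capacity \<alpha> A \<le> inner_capacity \<alpha> B"
  unfolding inner_capacity_eq_inverse_min_energy riesz_min_energy_def
  by (intro ennreal_inverse_antimono INF_superset_mono)
    (auto simp: finite_energy_measures_def concentrated_on_def)

lemma riesz_min_energy_union_le:
  fixes A B :: "'a::euclidean_space set"
  assumes "\<alpha> \<le> real DIM('a)" "setdist A B > 0"
    and "riesz_min_energy \<alpha> A = ennreal a" "riesz_min_energy \<alpha> B = ennreal b" "0 \<le> a" "0 \<le> b"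
    and "0 \<le> s" "0 \<le> t" "s + t = 1"
  shows "riesz_min_energy \<alpha> (A \<union> B)
    \<le> ennreal (s * s * a + t * t * b + 2 * s * t * setdist A B powr (\<alpha> - real DIM('a)))"
    (is "_ \<le> ennreal ?X")
proof (rule ennreal_le_epsilon)
  fix e :: real assume "0 < e"
  have "riesz_min_energy \<alpha> A < ennreal (a + e)" "riesz_min_energy \<alpha> B < ennreal (b + e)"
    using assms(3-6) \<open>0 < e\<close> by (auto intro!: ennreal_lessI)
  then obtain \<mu> \<nu> where \<mu>: "\<mu> \<in> finite_energy_measures \<alpha> A" "emeasure \<mu> UNIV = 1"
      "riesz_energy \<alpha> \<mu> \<le> ennreal (a + e)"
    and \<nu>: "\<nu> \<in> finite_energy_measures \<alpha> B" "emeasure \<nu> UNIV = 1"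
      "riesz_energy \<alpha> \<nu> \<le> ennreal (b + e)"
    unfolding riesz_min_energy_def INF_less_iff by (auto dest: less_imp_le)
  define D where "D = setdist A B powr (\<alpha> - real DIM('a))"
  have D_nonneg: "0 \<le> D"
    by (simp add: D_def)
  define \<rho> where "\<rho> = add_measure (scale_measure (ennreal s) \<mu>) (scale_measure (ennreal t) \<nu>)"
  have "riesz_min_energy \<alpha> (A \<union> B) \<le> riesz_energy \<alpha> \<rho>"
    using mixture_in_finite_energy_measures[OF assms(1,2) \<mu>(1,2) \<nu>(1,2), of "ennreal s" "ennreal t"] assms(7-9)
    unfolding riesz_min_energy_def \<rho>_def by (intro INF_lower) (simp add: ennreal_plus[symmetric] del: ennreal_plus)
  also have "\<dots> \<le> ennreal s * ennreal s * ennreal (a + e) + ennreal t * ennreal t * ennreal (b + e)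
      + 2 * ennreal s * ennreal t * ennreal D"
    unfolding \<rho>_def D_def
    by (rule order_trans[OF riesz_energy_mixture_le_setdist[OF assms(1,2) \<mu>(1,2) \<nu>(1,2)]])
      (intro add_mono mult_left_mono \<mu>(3) \<nu>(3) order_refl; simp)
  also have "\<dots> = ennreal (s * s * (a + e) + t * t * (b + e) + 2 * s * t * D)"
    using assms(5-8) \<open>0 < e\<close> D_nonneg
    by (simp add: ennreal_mult[symmetric] ennreal_plus[symmetric] ennreal_numeral[symmetric]
        del: ennreal_plus ennreal_numeral)
  also have "\<dots> \<le> ennreal (?X + e)"
  proof (rule ennreal_leI)
    have "(s * s + t * t) * e \<le> ((s + t) * (s + t)) * e"
      using assms(7,8) \<open>0 < e\<close> by (intro mult_right_mono) (simp_all add: algebra_simps)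
    then show "s * s * (a + e) + t * t * (b + e) + 2 * s * t * D \<le> ?X + e"
      using assms(9) by (simp add: algebra_simps D_def)
  qed
  also have "\<dots> = ennreal ?X + ennreal e"
    using assms(5-8) \<open>0 < e\<close> D_nonneg by (simp add: D_def)
  finally show "riesz_min_energy \<alpha> (A \<union> B) \<le> ennreal ?X + ennreal e" .
qed

lemma mixture_energy_bound_real:
  fixes r\<^sub>1 r\<^sub>2 D :: real
  assumes "0 < r\<^sub>1" "0 < r\<^sub>2" "0 \<le> D"
  defines "s\<^sub>1 \<equiv> r\<^sub>1 / (r\<^sub>1 + r\<^sub>2)" and "s\<^sub>2 \<equiv> r\<^sub>2 / (r\<^sub>1 + r\<^sub>2)"
  shows "s\<^sub>1 * s\<^sub>1 * (1 / r\<^sub>1) + s\<^sub>2 * s\<^sub>2 * (1 / r\<^sub>2) + 2 * s\<^sub>1 * s\<^sub>2 * D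
    \<le> (1 + max r\<^sub>1 r\<^sub>2 * D) / (r\<^sub>1 + r\<^sub>2)"
proof -
  have q: "0 < r\<^sub>1 + r\<^sub>2"
    using assms(1,2) by simp
  have "2 * r\<^sub>1 * r\<^sub>2 \<le> max r\<^sub>1 r\<^sub>2 * (r\<^sub>1 + r\<^sub>2)"
    using assms(1,2) by (cases "r\<^sub>1 \<le> r\<^sub>2") (auto simp: max_def algebra_simps intro: mult_right_mono mult_left_mono)
  then have "2 * r\<^sub>1 * r\<^sub>2 * D \<le> max r\<^sub>1 r\<^sub>2 * (r\<^sub>1 + r\<^sub>2) * D"
    using assms(3) by (rule mult_right_mono)
  then have "2 * r\<^sub>1 * r\<^sub>2 * D / (r\<^sub>1 + r\<^sub>2) \<le> max r\<^sub>1 r\<^sub>2 * D"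
    using q by (simp add: divide_le_eq mult_ac)
  moreover have "s\<^sub>1 * s\<^sub>1 * (1 / r\<^sub>1) + s\<^sub>2 * s\<^sub>2 * (1 / r\<^sub>2) + 2 * s\<^sub>1 * s\<^sub>2 * D
      = (1 + 2 * r\<^sub>1 * r\<^sub>2 * D / (r\<^sub>1 + r\<^sub>2)) / (r\<^sub>1 + r\<^sub>2)"
    using assms(1,2) q unfolding s\<^sub>1_def s\<^sub>2_def by (simp add: field_simps add_divide_distrib[symmetric])
  ultimately show ?thesis
    using q by (simp add: divide_right_mono)
qed

lemma inner_capacity_union_ge:
  fixes A B :: "'a::euclidean_space set"
  assumes "\<alpha> \<le> real DIM('a)" "setdist A B > 0"
    and "inner_capacity \<alpha> A = ennreal r\<^sub>1" "inner_capacity \<alpha> B = ennreal r\<^sub>2" "0 < r\<^sub>1" "0 < r\<^sub>2"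
  shows "ennreal (r\<^sub>1 + r\<^sub>2)
    \<le> inner_capacity \<alpha> (A \<union> B) * ennreal (1 + max r\<^sub>1 r\<^sub>2 * setdist A B powr (\<alpha> - real DIM('a)))"
proof -
  define D where "D = setdist A B powr (\<alpha> - real DIM('a))"
  define K where "K = 1 + max r\<^sub>1 r\<^sub>2 * D"
  have K_pos: "0 < K"
    using assms(5,6) by (simp add: K_def D_def add_pos_nonneg)
  have min_energy: "riesz_min_energy \<alpha> A = ennreal (1 / r\<^sub>1)" "riesz_min_energy \<alpha> B = ennreal (1 / r\<^sub>2)"
    using assms(3-6) by (simp_all add: riesz_min_energy_eq_inverse_capacity inverse_ennreal divide_inverse)
  have "riesz_min_energy \<alpha> (A \<union> B) \<le> ennreal
      (r\<^sub>1 / (r\<^sub>1 + r\<^sub>2) * (r\<^sub>1 / (r\<^sub>1 + r\<^sub>2)) * (1 / r\<^sub>1) + r\<^sub>2 / (r\<^sub>1 + r\<^sub>2) * (r\<^sub>2 / (r\<^sub>1 + r\<^sub>2)) * (1 / r\<^sub>2)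
        + 2 * (r\<^sub>1 / (r\<^sub>1 + r\<^sub>2)) * (r\<^sub>2 / (r\<^sub>1 + r\<^sub>2)) * D)"
    unfolding D_def using assms(5,6)
    by (intro riesz_min_energy_union_le[OF assms(1,2) min_energy])
      (simp_all add: add_divide_distrib[symmetric])
  also have "\<dots> \<le> ennreal (K / (r\<^sub>1 + r\<^sub>2))"
    unfolding K_def using assms(5,6) by (intro ennreal_leI mixture_energy_bound_real) (simp_all add: D_def)
  finally have "inverse (ennreal (K / (r\<^sub>1 + r\<^sub>2))) \<le> inner_capacity \<alpha> (A \<union> B)"
    unfolding inner_capacity_eq_inverse_min_energy by (rule ennreal_inverse_antimono)
  also have "inverse (ennreal (K / (r\<^sub>1 + r\<^sub>2))) = ennreal ((r\<^sub>1 + r\<^sub>2) / K)"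
    using K_pos assms(5,6) by (simp add: inverse_ennreal)
  finally have "ennreal ((r\<^sub>1 + r\<^sub>2) / K) * ennreal K \<le> inner_capacity \<alpha> (A \<union> B) * ennreal K"
    by (rule mult_right_mono) simp
  also have "ennreal ((r\<^sub>1 + r\<^sub>2) / K) * ennreal K = ennreal (r\<^sub>1 + r\<^sub>2)"
    using K_pos assms(5,6) by (subst ennreal_mult[symmetric]) auto
  finally show ?thesis
    unfolding K_def D_def .
qed

theorem mainTheorem5:
  fixes A\<^sub>1 A\<^sub>2 :: "'a::euclidean_space set" and \<alpha> :: real
  assumes "DIM('a) \<ge> 3" and "0 < \<alpha>" and "\<alpha> \<le> 2"
    and "setdist A\<^sub>1 A\<^sub>2 > 0"
  shows "inner_capacity \<alpha> A\<^sub>1 + inner_capacity \<alpha> A\<^sub>2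
    \<le> inner_capacity \<alpha> (A\<^sub>1 \<union> A\<^sub>2) *
       (1 + max (inner_capacity \<alpha> A\<^sub>1) (inner_capacity \<alpha> A\<^sub>2)
            / ennreal (setdist A\<^sub>1 A\<^sub>2 powr (real DIM('a) - \<alpha>)))"
    (is "?c\<^sub>1 + ?c\<^sub>2 \<le> ?C * ?F")
proof (cases "?c\<^sub>1 \<in> {0, \<infinity>} \<or> ?c\<^sub>2 \<in> {0, \<infinity>}")
  case True
  then show ?thesis
    by (intro ennreal_add_le_mult_if_degenerate inner_capacity_mono) auto
next
  case False
  then obtain r\<^sub>1 r\<^sub>2 where r: "?c\<^sub>1 = ennreal r\<^sub>1" "?c\<^sub>2 = ennreal r\<^sub>2" "0 < r\<^sub>1" "0 < r\<^sub>2"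
    by (cases ?c\<^sub>1 rule: ennreal_cases; cases ?c\<^sub>2 rule: ennreal_cases) auto
  have "max ?c\<^sub>1 ?c\<^sub>2 = ennreal (max r\<^sub>1 r\<^sub>2)"
    using r by (cases "r\<^sub>1 \<le> r\<^sub>2") (auto simp: max_def ennreal_leI)
  moreover have "setdist A\<^sub>1 A\<^sub>2 powr (\<alpha> - real DIM('a)) = 1 / setdist A\<^sub>1 A\<^sub>2 powr (real DIM('a) - \<alpha>)"
    by (simp add: powr_minus_divide[symmetric])
  ultimately have F_eq: "?F = ennreal (1 + max r\<^sub>1 r\<^sub>2 * setdist A\<^sub>1 A\<^sub>2 powr (\<alpha> - real DIM('a)))"
    using r assms(4) by (simp add: divide_ennreal)
  have "?c\<^sub>1 + ?c\<^sub>2 = ennreal (r\<^sub>1 + r\<^sub>2)"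
    using r by simp
  also have "\<dots> \<le> ?C * ?F"
    unfolding F_eq using assms(1,3) r by (intro inner_capacity_union_ge[OF _ assms(4)]) auto
  finally show ?thesis .
qed

end
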